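(* Let $S$ be a set of $n$ points in $\mathbb{R}^D$, let $t\geqslant 1$ be a real number, let $G$ be a $t$-spanner for $S$, and let $T$ be a minimum spanning tree of $G$. Let $m$ be an integer with $1\leqslant m\leqslant n-1$, and let $T'$ and $T''$ be two vertex-disjoint subtrees (connected subgraphs) of $T$, each consisting of at most $m$ vertices. Let $p$ be a vertex of $T'$, let $q$ be a vertex of $T''$, and let $\gamma$ be the path in $T$ between $p$ and $q$. If $x$ is a vertex of $T'$ lying on the subpath of $\gamma$ within $T'$, and $y$ is a vertex of $T''$ lying on the subpath of $\gamma$ within $T''$, then $$d(x,y)\leqslant \big(2t(m-1)+1\big)\cdot d(p,q).$$
   Context: $d(u,v)$ denotes Euclidean distance. For a graph $G$ with vertex set $S\subset\mathbb{R}^D$, each edge $(u,v)$ has weight (length) $d(u,v)$ and $d_G(u,v)$ is the length of a shortest path in $G$ between $u$ and $v$. $G$ is a $t$-spanner for $S$ if its vertex set is $S$ and $d_G(u,v)\leqslant t\cdot d(u,v)$ for all $u,v\in S$. A minimum spanning tree of $G$ is a spanning tree of $G$ (using only edges of $G$) of minimum total edge weight. *)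

theory Defs
  imports "HOL-Analysis.Analysis"
begin

text \<open>Geometric graphs: vertex set S (points of a Euclidean space), edge set E given as a
  symmetric irreflexive relation on S; the edge (u,v) has weight dist u v.\<close>

definition geom_graph :: "'a::euclidean_space set \<Rightarrow> ('a \<times> 'a) set \<Rightarrow> bool" where
  "geom_graph S E \<longleftrightarrow> E \<subseteq> S \<times> S \<and> sym E \<and> (\<forall>u. (u,u) \<notin> E)"

definition walk :: "('a \<times> 'a) set \<Rightarrow> 'a list \<Rightarrow> 'a \<Rightarrow> 'a \<Rightarrow> bool" where
  "walk E xs u v \<longleftrightarrow> xs \<noteq> [] \<and> hd xs = u \<and> last xs = v \<and> set (zip xs (tl xs)) \<subseteq> E"

definition walk_length :: "'a::euclidean_space list \<Rightarrow> real" where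
  "walk_length xs = (\<Sum>i<length xs - 1. dist (xs ! i) (xs ! Suc i))"

definition graph_dist :: "('a::euclidean_space \<times> 'a) set \<Rightarrow> 'a \<Rightarrow> 'a \<Rightarrow> real" where
  "graph_dist E u v = Inf {walk_length xs | xs. walk E xs u v}"

text \<open>t-spanner: d_G(u,v) \<le> t d(u,v) for all u,v in S (with d_G = infinity if disconnected,
  hence connectivity is required).\<close>
definition t_spanner :: "real \<Rightarrow> 'a::euclidean_space set \<Rightarrow> ('a \<times> 'a) set \<Rightarrow> bool" where
  "t_spanner t S E \<longleftrightarrow> geom_graph S E \<and>
     (\<forall>u\<in>S. \<forall>v\<in>S. (\<exists>xs. walk E xs u v) \<and> graph_dist E u v \<le> t * dist u v)"

definition connected_on :: "'a set \<Rightarrow> ('a \<times> 'a) set \<Rightarrow> bool" where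
  "connected_on V E \<longleftrightarrow> (\<forall>u\<in>V. \<forall>v\<in>V. \<exists>xs. walk E xs u v \<and> set xs \<subseteq> V)"

definition has_cycle :: "('a \<times> 'a) set \<Rightarrow> bool" where
  "has_cycle E \<longleftrightarrow> (\<exists>xs. length xs \<ge> 3 \<and> distinct xs \<and> set (zip xs (tl xs)) \<subseteq> E
                        \<and> (last xs, hd xs) \<in> E)"

definition spanning_tree :: "'a set \<Rightarrow> ('a \<times> 'a) set \<Rightarrow> ('a \<times> 'a) set \<Rightarrow> bool" where
  "spanning_tree S E T \<longleftrightarrow> T \<subseteq> E \<and> sym T \<and> connected_on S T \<and> \<not> has_cycle T"

text \<open>Total weight of an undirected graph given as a symmetric relation (each edge counted twice).\<close>
definition total_weight :: "('a::euclidean_space \<times> 'a) set \<Rightarrow> real" where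
  "total_weight T = (\<Sum>(u,v)\<in>T. dist u v) / 2"

definition minimum_spanning_tree :: "'a::euclidean_space set \<Rightarrow> ('a \<times> 'a) set \<Rightarrow> ('a \<times> 'a) set \<Rightarrow> bool" where
  "minimum_spanning_tree S E T \<longleftrightarrow> spanning_tree S E T \<and>
     (\<forall>T'. spanning_tree S E T' \<longrightarrow> total_weight T \<le> total_weight T')"

definition subtree_of :: "('a \<times> 'a) set \<Rightarrow> 'a set \<Rightarrow> ('a \<times> 'a) set \<Rightarrow> bool" where
  "subtree_of T V E' \<longleftrightarrow> E' \<subseteq> T \<and> E' \<subseteq> V \<times> V \<and> sym E' \<and> connected_on V E'"

definition path_in :: "('a \<times> 'a) set \<Rightarrow> 'a list \<Rightarrow> 'a \<Rightarrow> 'a \<Rightarrow> bool" where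
  "path_in E xs u v \<longleftrightarrow> walk E xs u v \<and> distinct xs"

end

theory Submission
  imports Defs
begin

(* The tree path from p to x inside T' has at most m - 1 edges, and each of them lies on gamma,
   so deleting it from T separates p from q. A G-walk from p to q then crosses this cut through
   some edge cd, and exchanging the tree edge ab for cd shows, by minimality of T, that
   d(a,b) <= d(c,d) <= length of the walk; as G is a t-spanner, d(a,b) <= t d(p,q). Hence
   d(p,x) <= (m-1) t d(p,q), likewise d(q,y) <= (m-1) t d(p,q), and the triangle inequality
   through p and q gives the bound. *)

definition walk_edges :: "'a list \<Rightarrow> ('a \<times> 'a) list" where
  "walk_edges xs = zip xs (tl xs)"

lemma walk_edges_simps [simp]:
  "walk_edges [] = []" "walk_edges [x] = []"
  "walk_edges (x # y # zs) = (x, y) # walk_edges (y # zs)"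
  by (auto simp: walk_edges_def)

lemma walk_edges_append:
  "walk_edges (xs @ y # ys) = walk_edges (xs @ [y]) @ walk_edges (y # ys)"
  by (induction xs rule: induct_list012) auto

lemma walk_edges_snoc: "xs \<noteq> [] \<Longrightarrow> walk_edges (xs @ [z]) = walk_edges xs @ [(last xs, z)]"
  by (induction xs rule: induct_list012) auto

lemma in_set_walk_edges_iff:
  "(a, b) \<in> set (walk_edges xs) \<longleftrightarrow> (\<exists>i. Suc i < length xs \<and> a = xs ! i \<and> b = xs ! Suc i)"
  unfolding walk_edges_def
  by (auto simp: set_zip nth_tl) (metis Suc_lessD less_diff_conv add_Suc_right add_0_right)

lemma in_set_walk_edges_split: "(a, b) \<in> set (walk_edges xs) \<Longrightarrow> \<exists>ys zs. xs = ys @ a # b # zs"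
proof (induction xs rule: induct_list012)
  case (3 x y zs)
  then show ?case by (auto intro: exI[of _ "[]"]) (metis append_Cons)
qed auto

lemma in_set_walk_edges_vertices: "(a, b) \<in> set (walk_edges xs) \<Longrightarrow> a \<in> set xs \<and> b \<in> set xs"
  by (auto simp: in_set_walk_edges_iff)

lemma walk_iff_walk_edges:
  "walk E xs u v \<longleftrightarrow> xs \<noteq> [] \<and> hd xs = u \<and> last xs = v \<and> set (walk_edges xs) \<subseteq> E"
  by (simp add: walk_def walk_edges_def)

lemma walk_edges_crossing:
  "xs \<noteq> [] \<Longrightarrow> P (hd xs) \<Longrightarrow> \<not> P (last xs) \<Longrightarrow>
    \<exists>c d. (c, d) \<in> set (walk_edges xs) \<and> P c \<and> \<not> P d"
proof (induction xs rule: induct_list012)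
  case (3 x y zs)
  then show ?case by (cases "P y") auto
qed auto

lemma walk_edges_subset_imp_rtrancl:
  "set (walk_edges xs) \<subseteq> E \<Longrightarrow> z \<in> set xs \<Longrightarrow> (hd xs, z) \<in> E\<^sup>*"
proof (induction xs rule: induct_list012)
  case (3 x y zs)
  then show ?case
    by simp (metis converse_rtrancl_into_rtrancl list.sel(1) rtrancl.rtrancl_refl)
qed auto

lemma walk_imp_rtrancl: "walk E xs u v \<Longrightarrow> (u, v) \<in> E\<^sup>*"
  unfolding walk_iff_walk_edges using walk_edges_subset_imp_rtrancl[of xs E "last xs"] by auto

lemma rtrancl_imp_walk: "(u, v) \<in> E\<^sup>* \<Longrightarrow> \<exists>xs. walk E xs u v \<and> set xs \<subseteq> insert u (snd ` E)"
proof (induction rule: rtrancl_induct)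
  case base
  show ?case by (auto simp: walk_iff_walk_edges intro: exI[of _ "[u]"])
next
  case (step y z)
  then obtain xs where "walk E xs u y" "set xs \<subseteq> insert u (snd ` E)" by blast
  moreover have "z \<in> snd ` E" using step(2) by force
  ultimately show ?case
    using step(2) by (intro exI[of _ "xs @ [z]"]) (auto simp: walk_iff_walk_edges walk_edges_snoc)
qed

lemma walk_imp_path: "walk E xs u v \<Longrightarrow> \<exists>ys. path_in E ys u v \<and> set ys \<subseteq> set xs"
proof (induction xs rule: length_induct)
  case (1 xs)
  show ?case
  proof (cases "distinct xs")
    case True
    then show ?thesis using 1 by (auto simp: path_in_def)
  next
    case False
    then obtain as bs cs w where xs: "xs = as @ [w] @ bs @ [w] @ cs"
      using not_distinct_decomp by blast
    let ?ys = "as @ w # cs"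
    have "set (walk_edges ?ys) \<subseteq> set (walk_edges xs)"
      using walk_edges_append[of as w cs] walk_edges_append[of as w "bs @ w # cs"]
        walk_edges_append[of "w # bs" w cs]
      by (auto simp: xs)
    moreover have "hd ?ys = hd xs" by (cases as) (auto simp: xs)
    moreover have "last ?ys = last xs" by (cases cs) (auto simp: xs)
    ultimately have "walk E ?ys u v" using 1(2) by (auto simp: walk_iff_walk_edges)
    moreover have "length ?ys < length xs" by (simp add: xs)
    ultimately obtain zs where "path_in E zs u v \<and> set zs \<subseteq> set ?ys" using 1(1) by blast
    then show ?thesis by (auto simp: xs)
  qed
qed

lemma connected_on_iff_rtrancl:
  assumes "E \<subseteq> V \<times> V"
  shows "connected_on V E \<longleftrightarrow> (\<forall>u\<in>V. \<forall>v\<in>V. (u, v) \<in> E\<^sup>*)"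
proof
  assume "connected_on V E"
  then show "\<forall>u\<in>V. \<forall>v\<in>V. (u, v) \<in> E\<^sup>*"
    unfolding connected_on_def using walk_imp_rtrancl by metis
next
  assume reach: "\<forall>u\<in>V. \<forall>v\<in>V. (u, v) \<in> E\<^sup>*"
  show "connected_on V E"
    unfolding connected_on_def
  proof (intro ballI)
    fix u v assume "u \<in> V" "v \<in> V"
    then obtain xs where "walk E xs u v" "set xs \<subseteq> insert u (snd ` E)"
      using reach rtrancl_imp_walk by metis
    moreover have "insert u (snd ` E) \<subseteq> V" using assms \<open>u \<in> V\<close> by auto
    ultimately show "\<exists>xs. walk E xs u v \<and> set xs \<subseteq> V" by blast
  qed
qed

lemma walk_length_Cons2: "walk_length (a # b # xs) = dist a b + walk_length (b # xs)"
  unfolding walk_length_def by (simp add: sum.lessThan_Suc_shift del: sum.lessThan_Suc)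

lemma dist_hd_last_le_walk_length: "xs \<noteq> [] \<Longrightarrow> dist (hd xs) (last xs) \<le> walk_length xs"
proof (induction xs rule: induct_list012)
  case (3 x y zs)
  have "dist x (last (y # zs)) \<le> dist x y + dist y (last (y # zs))" by (rule dist_triangle)
  also have "\<dots> \<le> dist x y + walk_length (y # zs)" using 3(2) by simp
  finally show ?case by (simp add: walk_length_Cons2)
qed (auto simp: walk_length_def)

lemma walk_edge_dist_le_walk_length: "(c, d) \<in> set (walk_edges xs) \<Longrightarrow> dist c d \<le> walk_length xs"
proof -
  assume "(c, d) \<in> set (walk_edges xs)"
  then obtain i where i: "Suc i < length xs" "c = xs ! i" "d = xs ! Suc i"
    by (auto simp: in_set_walk_edges_iff)
  then show ?thesis
    unfolding walk_length_def
    by (auto intro!: member_le_sum[where f = "\<lambda>i. dist (xs ! i) (xs ! Suc i)"])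
qed

lemma walk_length_le_edge_bound:
  assumes "\<And>c d. (c, d) \<in> set (walk_edges xs) \<Longrightarrow> dist c d \<le> L"
  shows "walk_length xs \<le> real (length xs - 1) * L"
proof -
  have "walk_length xs \<le> (\<Sum>i<length xs - 1. L)"
    unfolding walk_length_def
    by (intro sum_mono assms) (auto simp: in_set_walk_edges_iff intro!: exI)
  then show ?thesis by simp
qed

abbreviation del_edge :: "('a \<times> 'a) set \<Rightarrow> 'a \<Rightarrow> 'a \<Rightarrow> ('a \<times> 'a) set" where
  "del_edge T a b \<equiv> T - {(a, b), (b, a)}"

lemma sym_del_edge: "sym T \<Longrightarrow> sym (del_edge T a b)"
  unfolding sym_def by blast

lemma rtrancl_sym_swap: "sym E \<Longrightarrow> (u, v) \<in> E\<^sup>* \<Longrightarrow> (v, u) \<in> E\<^sup>*"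
  using sym_rtrancl by (metis symD)

lemma rtrancl_del_edge_cases:
  "(u, z) \<in> T\<^sup>* \<Longrightarrow>
    (u, z) \<in> (del_edge T a b)\<^sup>* \<or> (a, z) \<in> (del_edge T a b)\<^sup>* \<or> (b, z) \<in> (del_edge T a b)\<^sup>*"
proof (induction rule: rtrancl_induct)
  case (step y z)
  show ?case
  proof (cases "(y, z) \<in> del_edge T a b")
    case True
    then show ?thesis using step(3) by (meson rtrancl_into_rtrancl)
  next
    case False
    then have "z = a \<or> z = b" using step(2) by blast
    then show ?thesis by auto
  qed
qed simp

lemma rtrancl_del_edge_eq:
  assumes "(a, b) \<in> (del_edge T a b)\<^sup>*" and "sym T"
  shows "(del_edge T a b)\<^sup>* = T\<^sup>*"
proof
  have "(b, a) \<in> (del_edge T a b)\<^sup>*"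
    using rtrancl_sym_swap[OF sym_del_edge[OF \<open>sym T\<close>] assms(1)] .
  with assms(1) have "T \<subseteq> (del_edge T a b)\<^sup>*" by auto
  then show "T\<^sup>* \<subseteq> (del_edge T a b)\<^sup>*" by (rule rtrancl_subset_rtrancl)
qed (rule rtrancl_mono, blast)

lemma has_cycle_iff_edge_survives_deletion:
  assumes "sym T"
  shows "has_cycle T \<longleftrightarrow> (\<exists>a b. (a, b) \<in> T \<and> a \<noteq> b \<and> (a, b) \<in> (del_edge T a b)\<^sup>*)"
proof
  assume "has_cycle T"
  then obtain xs where len: "length xs \<ge> 3" and dxs: "distinct xs"
    and edges: "set (walk_edges xs) \<subseteq> T" and closing: "(last xs, hd xs) \<in> T"
    unfolding has_cycle_def walk_edges_def by blast
  define a b where "a = last xs" and "b = hd xs"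
  have ne: "xs \<noteq> []" using len by auto
  have a: "a = xs ! (length xs - 1)" and b: "b = xs ! 0"
    unfolding a_def b_def using ne by (simp_all add: last_conv_nth hd_conv_nth)
  have "(c, d) \<notin> set (walk_edges xs)" if "(c, d) \<in> {(a, b), (b, a)}" for c d
  proof
    assume "(c, d) \<in> set (walk_edges xs)"
    then obtain i where i: "Suc i < length xs" "c = xs ! i" "d = xs ! Suc i"
      by (auto simp: in_set_walk_edges_iff)
    have "i < length xs" "0 < length xs" "length xs - 1 < length xs" using i(1) by auto
    then have "i = 0 \<and> Suc i = length xs - 1 \<or> i = length xs - 1"
      using that i nth_eq_iff_index_eq[OF dxs] unfolding a b by auto
    then show False using i(1) len by linarith
  qed
  with edges have "set (walk_edges xs) \<subseteq> del_edge T a b" by blast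
  with ne have "walk (del_edge T a b) xs b a"
    unfolding walk_iff_walk_edges a_def b_def by simp
  then have "(b, a) \<in> (del_edge T a b)\<^sup>*" by (rule walk_imp_rtrancl)
  then have "(a, b) \<in> (del_edge T a b)\<^sup>*"
    using rtrancl_sym_swap[OF sym_del_edge[OF assms]] by blast
  moreover have "a \<noteq> b"
    using len ne nth_eq_iff_index_eq[OF dxs, of "length xs - 1" 0] unfolding a b by simp
  ultimately show "\<exists>a b. (a, b) \<in> T \<and> a \<noteq> b \<and> (a, b) \<in> (del_edge T a b)\<^sup>*"
    using closing a_def b_def by blast
next
  assume "\<exists>a b. (a, b) \<in> T \<and> a \<noteq> b \<and> (a, b) \<in> (del_edge T a b)\<^sup>*"
  then obtain a b where ab: "(a, b) \<in> T" "a \<noteq> b" and "(a, b) \<in> (del_edge T a b)\<^sup>*" by blast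
  then obtain xs0 where "walk (del_edge T a b) xs0 a b" using rtrancl_imp_walk by metis
  then obtain xs where "path_in (del_edge T a b) xs a b" using walk_imp_path by metis
  then have xs: "xs \<noteq> []" "hd xs = a" "last xs = b" "set (walk_edges xs) \<subseteq> del_edge T a b"
    and dxs: "distinct xs"
    unfolding path_in_def walk_iff_walk_edges by auto
  have "length xs \<ge> 3"
  proof (rule ccontr)
    assume "\<not> length xs \<ge> 3"
    moreover have "length xs \<noteq> 0" using xs(1) by simp
    ultimately have "length xs = 1 \<or> length xs = 2" by linarith
    then show False using xs ab(2) by (auto simp: length_Suc_conv numeral_2_eq_2)
  qed
  moreover have "(last xs, hd xs) \<in> T" using xs ab(1) assms by (auto simp: sym_def)
  ultimately show "has_cycle T"
    using xs(4) dxs unfolding has_cycle_def walk_edges_def by blast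
qed

lemma path_edge_separates_ends:
  assumes "sym T" and "\<not> has_cycle T" and "path_in T xs u v" and "(a, b) \<in> set (walk_edges xs)"
  shows "(u, v) \<notin> (del_edge T a b)\<^sup>*"
proof
  assume uv: "(u, v) \<in> (del_edge T a b)\<^sup>*"
  from assms(3) have xs: "xs \<noteq> []" "hd xs = u" "last xs = v" "set (walk_edges xs) \<subseteq> T"
    and dxs: "distinct xs"
    unfolding path_in_def walk_iff_walk_edges by auto
  obtain ys zs where split: "xs = ys @ a # b # zs"
    using in_set_walk_edges_split[OF assms(4)] by blast
  have ab: "(a, b) \<in> T" "a \<noteq> b" using assms(4) xs(4) dxs split by auto
  have avoid: "set (walk_edges ws) \<subseteq> del_edge T a b"
    if "set (walk_edges ws) \<subseteq> T" "a \<notin> set ws \<or> b \<notin> set ws" for ws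
    using that in_set_walk_edges_vertices by fastforce
  have edges: "set (walk_edges (ys @ [a])) \<subseteq> T" "set (walk_edges (b # zs)) \<subseteq> T"
    using xs(4) walk_edges_append[of "ys @ [a]" b zs] walk_edges_append[of ys a "b # zs"]
    unfolding split by auto
  have "(u, a) \<in> (del_edge T a b)\<^sup>*"
    using walk_edges_subset_imp_rtrancl[OF avoid[OF edges(1)], of a] dxs xs(2)
    unfolding split by (cases ys) auto
  moreover have "(b, v) \<in> (del_edge T a b)\<^sup>*"
    using walk_edges_subset_imp_rtrancl[OF avoid[OF edges(2)], of v] dxs xs(3)
    unfolding split by auto
  ultimately have "(a, b) \<in> (del_edge T a b)\<^sup>*"
    using uv rtrancl_sym_swap[OF sym_del_edge[OF assms(1)]] by (meson rtrancl_trans)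
  then show False
    using ab assms(1,2) has_cycle_iff_edge_survives_deletion by blast
qed

lemma tree_path_edge_on_path:
  assumes "sym T" and "\<not> has_cycle T" and \<gamma>: "path_in T \<gamma> p q" and "z \<in> set \<gamma>"
    and \<pi>: "path_in T \<pi> w z" and "w \<in> {p, q}" and ab: "(a, b) \<in> set (walk_edges \<pi>)"
  shows "(a, b) \<in> set (walk_edges \<gamma>) \<or> (b, a) \<in> set (walk_edges \<gamma>)"
proof (rule ccontr)
  assume "\<not> ?thesis"
  moreover have \<gamma>_walk: "\<gamma> \<noteq> []" "hd \<gamma> = p" "last \<gamma> = q" "set (walk_edges \<gamma>) \<subseteq> T"
    using \<gamma> unfolding path_in_def walk_iff_walk_edges by auto
  ultimately have \<gamma>_edges: "set (walk_edges \<gamma>) \<subseteq> del_edge T a b" by auto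
  have pz: "(p, z) \<in> (del_edge T a b)\<^sup>*"
    using walk_edges_subset_imp_rtrancl[OF \<gamma>_edges \<open>z \<in> set \<gamma>\<close>] \<gamma>_walk(2) by simp
  have "(p, q) \<in> (del_edge T a b)\<^sup>*"
    using walk_edges_subset_imp_rtrancl[OF \<gamma>_edges, of q] \<gamma>_walk last_in_set by metis
  then have "(q, z) \<in> (del_edge T a b)\<^sup>*"
    using pz rtrancl_sym_swap[OF sym_del_edge[OF \<open>sym T\<close>]] by (meson rtrancl_trans)
  with pz \<open>w \<in> {p, q}\<close> have "(w, z) \<in> (del_edge T a b)\<^sup>*" by blast
  then show False using path_edge_separates_ends[OF assms(1,2) \<pi> ab] by blast
qed

lemma connected_on_exchange_edge:
  assumes "sym T" and "T \<subseteq> V \<times> V" and "connected_on V T" and "(a, b) \<in> T"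
    and "c \<in> V" and "d \<in> V" and cd: "(c, d) \<notin> (del_edge T a b)\<^sup>*"
  shows "connected_on V (del_edge T a b \<union> {(c, d), (d, c)})"
proof -
  define T0 where "T0 = del_edge T a b"
  define T' where "T' = T0 \<union> {(c, d), (d, c)}"
  have sym0: "(u, v) \<in> T0\<^sup>* \<Longrightarrow> (v, u) \<in> T0\<^sup>*" for u v
    using rtrancl_sym_swap[OF sym_del_edge[OF \<open>sym T\<close>]] unfolding T0_def by blast
  have lift: "(u, v) \<in> T0\<^sup>* \<Longrightarrow> (u, v) \<in> T'\<^sup>*" for u v
    using rtrancl_mono[of T0 T'] unfolding T'_def by blast
  have reach: "\<forall>u\<in>V. \<forall>v\<in>V. (u, v) \<in> T\<^sup>*"
    using assms(3) connected_on_iff_rtrancl[OF assms(2)] by blast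
  have from_ends: "(a, z) \<in> T0\<^sup>* \<or> (b, z) \<in> T0\<^sup>*" if "z \<in> V" for z
    using rtrancl_del_edge_cases[of a z T a b] reach assms(2,4) that unfolding T0_def by blast
  \<comment> \<open>Every vertex is joined to a or to b in T0, and c, d lie on different sides of the cut.\<close>
  have "(u, c) \<in> T0\<^sup>* \<Longrightarrow> (u, d) \<notin> T0\<^sup>*" for u
    using cd sym0 rtrancl_trans unfolding T0_def by metis
  then consider "(a, c) \<in> T0\<^sup>*" "(b, d) \<in> T0\<^sup>*" | "(b, c) \<in> T0\<^sup>*" "(a, d) \<in> T0\<^sup>*"
    using from_ends[OF \<open>c \<in> V\<close>] from_ends[OF \<open>d \<in> V\<close>] by blast
  then have ab: "(a, b) \<in> T'\<^sup>*"
  proof cases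
    case 1
    have "(c, d) \<in> T'" by (simp add: T'_def)
    with 1 show ?thesis
      using lift[of a c] lift[OF sym0[OF 1(2)]] by (meson rtrancl_trans r_into_rtrancl)
  next
    case 2
    have "(d, c) \<in> T'" by (simp add: T'_def)
    with 2 show ?thesis
      using lift[of a d] lift[OF sym0[OF 2(1)]] by (meson rtrancl_trans r_into_rtrancl)
  qed
  have az: "(a, z) \<in> T'\<^sup>*" if "z \<in> V" for z
    using from_ends[OF that] lift ab rtrancl_trans by metis
  have "sym T'"
    using sym_del_edge[OF \<open>sym T\<close>] unfolding T'_def T0_def sym_def by blast
  then have "(u, v) \<in> T'\<^sup>*" if "u \<in> V" "v \<in> V" for u v
    using az[OF that(1)] az[OF that(2)] rtrancl_sym_swap rtrancl_trans by metis
  moreover have "T' \<subseteq> V \<times> V" using assms(2,5,6) unfolding T'_def T0_def by auto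
  ultimately have "connected_on V T'" using connected_on_iff_rtrancl[of T' V] by blast
  then show ?thesis unfolding T'_def T0_def .
qed

lemma spanning_tree_subset_exists:
  assumes "finite H" and "H \<subseteq> G" and "H \<subseteq> S \<times> S" and "sym H" and "connected_on S H"
  shows "\<exists>H'. H' \<subseteq> H \<and> spanning_tree S G H'"
proof -
  let ?P = "\<lambda>H'. H' \<subseteq> H \<and> sym H' \<and> connected_on S H'"
  have "\<exists>H'. ?P H' \<and> (\<forall>H''. ?P H'' \<longrightarrow> card H' \<le> card H'')"
    by (rule ex_has_least_nat[of _ H]) (use assms(4,5) in simp)
  then obtain H' where P: "H' \<subseteq> H" "sym H'" "connected_on S H'"
    and min: "\<And>H''. ?P H'' \<Longrightarrow> card H' \<le> card H''"
    by blast
  have "\<not> has_cycle H'"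
  proof
    assume "has_cycle H'"
    then obtain a b where ab: "(a, b) \<in> H'" "(a, b) \<in> (del_edge H' a b)\<^sup>*"
      unfolding has_cycle_iff_edge_survives_deletion[OF P(2)] by blast
    have H'_S: "H' \<subseteq> S \<times> S" using P(1) assms(3) by blast
    then have "\<forall>u\<in>S. \<forall>v\<in>S. (u, v) \<in> H'\<^sup>*"
      using P(3) connected_on_iff_rtrancl[of H' S] by blast
    moreover have "(del_edge H' a b)\<^sup>* = H'\<^sup>*" by (rule rtrancl_del_edge_eq[OF ab(2) P(2)])
    moreover have "del_edge H' a b \<subseteq> S \<times> S" using H'_S by blast
    ultimately have "connected_on S (del_edge H' a b)"
      using connected_on_iff_rtrancl[of "del_edge H' a b" S] by simp
    then have "card H' \<le> card (del_edge H' a b)"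
      using P(1) sym_del_edge[OF P(2)] by (intro min) blast
    moreover have "finite H'" using P(1) assms(1) finite_subset by blast
    then have "card (del_edge H' a b) < card H'" using ab(1) by (intro psubset_card_mono) auto
    ultimately show False by linarith
  qed
  then show ?thesis using P assms(2) unfolding spanning_tree_def by blast
qed

lemma total_weight_mono: "finite B \<Longrightarrow> A \<subseteq> B \<Longrightarrow> total_weight A \<le> total_weight B"
  unfolding total_weight_def by (intro divide_right_mono sum_mono2) auto

lemma total_weight_Un_le:
  assumes "finite A" and "finite B"
  shows "total_weight (A \<union> B) \<le> total_weight A + total_weight B"
proof -
  have "(\<Sum>(u, v)\<in>A \<union> B. dist u v) + (\<Sum>(u, v)\<in>A \<inter> B. dist u v)
      = (\<Sum>(u, v)\<in>A. dist u v) + (\<Sum>(u, v)\<in>B. dist u v)"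
    by (rule sum.union_inter[OF assms])
  moreover have "(\<Sum>(u, v)\<in>A \<inter> B. dist u v) \<ge> 0" by (intro sum_nonneg) auto
  ultimately show ?thesis unfolding total_weight_def by linarith
qed

lemma total_weight_edge: "total_weight {(a, b), (b, a)} = dist a b"
  by (cases "a = b") (auto simp: total_weight_def dist_commute)

lemma total_weight_del_edge:
  assumes "finite T" and "sym T" and "(a, b) \<in> T"
  shows "total_weight T = total_weight (del_edge T a b) + dist a b"
proof -
  have "{(a, b), (b, a)} \<subseteq> T" using assms(2,3) by (auto simp: sym_def)
  then have "(\<Sum>(u, v)\<in>T. dist u v)
      = (\<Sum>(u, v)\<in>del_edge T a b. dist u v) + (\<Sum>(u, v)\<in>{(a, b), (b, a)}. dist u v)"
    using assms(1) by (rule sum.subset_diff)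
  then show ?thesis using total_weight_edge[of a b] unfolding total_weight_def by simp
qed

lemma minimum_spanning_tree_exchange:
  assumes "finite S" and "geom_graph S G" and mst: "minimum_spanning_tree S G T"
    and "(a, b) \<in> T" and "(c, d) \<in> G" and cd: "(c, d) \<notin> (del_edge T a b)\<^sup>*"
  shows "dist a b \<le> dist c d"
proof -
  define T' where "T' = del_edge T a b \<union> {(c, d), (d, c)}"
  have G: "G \<subseteq> S \<times> S" "sym G" using assms(2) unfolding geom_graph_def by auto
  have T: "T \<subseteq> G" "sym T" "connected_on S T"
    using mst unfolding minimum_spanning_tree_def spanning_tree_def by auto
  have T'_G: "T' \<subseteq> G" using T(1) G(2) assms(5) unfolding T'_def by (auto intro: symD)
  have "finite G" using G(1) assms(1) finite_subset by blast
  then have fin: "finite T" "finite T'" "finite (del_edge T a b)"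
    using T(1) T'_G finite_subset by blast+
  have "T \<subseteq> S \<times> S" "c \<in> S" "d \<in> S" using T(1) G(1) assms(5) by auto
  then have "connected_on S T'"
    unfolding T'_def using connected_on_exchange_edge[OF T(2) _ T(3) assms(4) _ _ cd] by blast
  moreover have "sym T'" using sym_del_edge[OF T(2)] unfolding T'_def sym_def by blast
  moreover have "T' \<subseteq> S \<times> S" using T'_G G(1) by blast
  ultimately obtain H where "H \<subseteq> T'" and "spanning_tree S G H"
    using spanning_tree_subset_exists[OF fin(2) T'_G] by blast
  then have "total_weight T \<le> total_weight H"
    using mst unfolding minimum_spanning_tree_def by blast
  also have "\<dots> \<le> total_weight T'" by (rule total_weight_mono[OF fin(2) \<open>H \<subseteq> T'\<close>])
  also have "\<dots> \<le> total_weight (del_edge T a b) + dist c d"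
    using total_weight_Un_le[OF fin(3), of "{(c, d), (d, c)}"] total_weight_edge[of c d]
    unfolding T'_def by simp
  finally show ?thesis using total_weight_del_edge[OF fin(1) T(2) assms(4)] by simp
qed

lemma minimum_spanning_tree_edge_le_walk_length:
  assumes "finite S" and "geom_graph S G" and "minimum_spanning_tree S G T" and "(a, b) \<in> T"
    and walk: "walk G xs p q" and sep: "(p, q) \<notin> (del_edge T a b)\<^sup>*"
  shows "dist a b \<le> walk_length xs"
proof -
  obtain c d where cd: "(c, d) \<in> set (walk_edges xs)"
    and "(p, c) \<in> (del_edge T a b)\<^sup>*" "(p, d) \<notin> (del_edge T a b)\<^sup>*"
    using walk_edges_crossing[of xs "\<lambda>z. (p, z) \<in> (del_edge T a b)\<^sup>*"] walk sep
    by (auto simp: walk_iff_walk_edges)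
  then have "(c, d) \<notin> (del_edge T a b)\<^sup>*" by (meson rtrancl_trans)
  moreover have "(c, d) \<in> G" using cd walk by (auto simp: walk_iff_walk_edges)
  ultimately have "dist a b \<le> dist c d"
    using assms(1-4) by (intro minimum_spanning_tree_exchange)
  also have "\<dots> \<le> walk_length xs" using cd by (rule walk_edge_dist_le_walk_length)
  finally show ?thesis .
qed

lemma minimum_spanning_tree_edge_le_spanner:
  assumes "finite S" and spanner: "t_spanner t S G" and "minimum_spanning_tree S G T"
    and "(a, b) \<in> T" and "p \<in> S" and "q \<in> S" and "(p, q) \<notin> (del_edge T a b)\<^sup>*"
  shows "dist a b \<le> t * dist p q"
proof -
  have G: "geom_graph S G" and "\<exists>xs. walk G xs p q" and bound: "graph_dist G p q \<le> t * dist p q"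
    using spanner \<open>p \<in> S\<close> \<open>q \<in> S\<close> unfolding t_spanner_def by auto
  have "dist a b \<le> graph_dist G p q"
    unfolding graph_dist_def
  proof (rule cInf_greatest)
    fix l assume "l \<in> {walk_length xs |xs. walk G xs p q}"
    then obtain xs where "l = walk_length xs" and "walk G xs p q" by blast
    then show "dist a b \<le> l"
      using minimum_spanning_tree_edge_le_walk_length[OF assms(1) G assms(3,4) _ assms(7)] by simp
  qed (use \<open>\<exists>xs. walk G xs p q\<close> in blast)
  with bound show ?thesis by linarith
qed

lemma subtree_dist_to_path_vertex_le:
  fixes T :: "('a::euclidean_space \<times> 'a) set"
  assumes "sym T" and "\<not> has_cycle T" and "subtree_of T V E" and "finite V" and "card V \<le> m"
    and \<gamma>: "path_in T \<gamma> p q" and "w \<in> {p, q}" and "w \<in> V" and "z \<in> V" and "z \<in> set \<gamma>"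
    and "0 \<le> L"
    and edge_bound: "\<And>a b. (a, b) \<in> T \<Longrightarrow> (p, q) \<notin> (del_edge T a b)\<^sup>* \<Longrightarrow> dist a b \<le> L"
  shows "dist w z \<le> (real m - 1) * L"
proof -
  have "E \<subseteq> T" and "connected_on V E" using assms(3) unfolding subtree_of_def by auto
  then obtain xs where "walk E xs w z" and "set xs \<subseteq> V"
    using \<open>w \<in> V\<close> \<open>z \<in> V\<close> unfolding connected_on_def by blast
  then obtain \<pi> where "path_in E \<pi> w z" and "set \<pi> \<subseteq> V"
    using walk_imp_path by (metis order_trans)
  then have \<pi>: "path_in T \<pi> w z"
    using \<open>E \<subseteq> T\<close> unfolding path_in_def walk_iff_walk_edges by auto
  have "dist a b \<le> L" if ab: "(a, b) \<in> set (walk_edges \<pi>)" for a b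
  proof (rule edge_bound)
    show "(a, b) \<in> T" using ab \<pi> unfolding path_in_def walk_iff_walk_edges by auto
    have "(a, b) \<in> set (walk_edges \<gamma>) \<or> (b, a) \<in> set (walk_edges \<gamma>)"
      by (rule tree_path_edge_on_path[OF assms(1,2) \<gamma> \<open>z \<in> set \<gamma>\<close> \<pi> \<open>w \<in> {p, q}\<close> ab])
    then show "(p, q) \<notin> (del_edge T a b)\<^sup>*"
      using path_edge_separates_ends[OF assms(1,2) \<gamma>, of a b]
        path_edge_separates_ends[OF assms(1,2) \<gamma>, of b a]
      by (auto simp: insert_commute)
  qed
  then have "walk_length \<pi> \<le> real (length \<pi> - 1) * L" by (rule walk_length_le_edge_bound)
  moreover have "dist w z \<le> walk_length \<pi>"
    using dist_hd_last_le_walk_length \<pi> unfolding path_in_def walk_iff_walk_edges by auto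
  moreover have "real (length \<pi> - 1) \<le> real m - 1"
  proof -
    have "length \<pi> = card (set \<pi>)" using \<pi> unfolding path_in_def by (simp add: distinct_card)
    also have "\<dots> \<le> m" using card_mono[OF \<open>finite V\<close> \<open>set \<pi> \<subseteq> V\<close>] \<open>card V \<le> m\<close> by linarith
    finally show ?thesis using \<pi> unfolding path_in_def walk_iff_walk_edges by (cases \<pi>) auto
  qed
  ultimately show ?thesis using mult_right_mono[OF _ \<open>0 \<le> L\<close>] by (meson order_trans)
qed

theorem lemma6:
  fixes S :: "'a::euclidean_space set" and G T E1 E2 :: "('a \<times> 'a) set"
    and V1 V2 :: "'a set" and t :: real and n m :: nat
    and p q x y :: 'a and \<gamma> :: "'a list"
  assumes "finite S" and "card S = n"
    and "t \<ge> 1"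
    and "t_spanner t S G"
    and "minimum_spanning_tree S G T"
    and "1 \<le> m" and "m \<le> n - 1"
    and "V1 \<subseteq> S" and "V2 \<subseteq> S"
    and "subtree_of T V1 E1" and "subtree_of T V2 E2"
    and "V1 \<inter> V2 = {}"
    and "card V1 \<le> m" and "card V2 \<le> m"
    and "p \<in> V1" and "q \<in> V2"
    and "path_in T \<gamma> p q"
    and "x \<in> V1" and "x \<in> set \<gamma>"
    and "y \<in> V2" and "y \<in> set \<gamma>"
  shows "dist x y \<le> (2 * t * (real m - 1) + 1) * dist p q"
proof -
  have tree: "sym T" "\<not> has_cycle T"
    using assms(5) unfolding minimum_spanning_tree_def spanning_tree_def by auto
  have "p \<in> S" "q \<in> S" "finite V1" "finite V2"
    using assms(1,8,9,15,16) finite_subset by auto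
  then have edge_bound: "dist a b \<le> t * dist p q"
    if "(a, b) \<in> T" and "(p, q) \<notin> (del_edge T a b)\<^sup>*" for a b
    using minimum_spanning_tree_edge_le_spanner[OF assms(1,4,5) that(1) _ _ that(2)] by blast
  have "0 \<le> t * dist p q" using assms(3) by simp
  have px: "dist p x \<le> (real m - 1) * (t * dist p q)"
    using subtree_dist_to_path_vertex_le[OF tree assms(10) \<open>finite V1\<close> assms(13,17) _ assms(15,18,19)
        \<open>0 \<le> t * dist p q\<close> edge_bound] by blast
  have qy: "dist q y \<le> (real m - 1) * (t * dist p q)"
    using subtree_dist_to_path_vertex_le[OF tree assms(11) \<open>finite V2\<close> assms(14,17) _ assms(16,20,21)
        \<open>0 \<le> t * dist p q\<close> edge_bound] by blast
  have "dist x y \<le> dist p x + dist p q + dist q y"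
    using dist_triangle[of x y p] dist_triangle[of p y q] by (simp add: dist_commute)
  also have "\<dots> \<le> (2 * t * (real m - 1) + 1) * dist p q"
    using px qy by (simp add: algebra_simps)
  finally show ?thesis .
qed

end
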